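(* Let $C$ be a linear completely regular $[n,k,2]_q$ code with covering radius $\rho=1$ and $k<n-1$, let $n_a$ be the number of codewords at distance one from any vector not in $C$, and let $X_1,\dots,X_{n/n_a}$ be a partition of $\{1,\dots,n\}$ into sets of size $n_a$ such that every weight-2 codeword of $C$ has support contained in one of the $X_i$. For each $i$, let $D_i$ be the code obtained by taking the codewords of $C$ whose supports are contained in $X_i$ and deleting the coordinate positions outside $X_i$. Then $D_i$ is a linear completely regular code of length $n_a$, dimension $n_a-1$, minimum distance $2$ and covering radius $1$, and (for a suitable ordering of the coordinates in $X_i$) it has a generator matrix $G_i=[I\,|\,{\bf h}]$ where $I$ is the $(n_a-1)\times(n_a-1)$ identity matrix and ${\bf h}$ is a column vector of weight $n_a-1$.
   Context: Hamming distance; support of a vector = set of its nonzero coordinates; covering radius $\rho=\max_{\bf v}\min_{{\bf x}\in C}d({\bf v},{\bf x})$. $C$ is completely regular if for every vector ${\bf x}$, with $t=d({\bf x},C)$, the number of codewords at distance $i$ from ${\bf x}$ depends only on $t$ and $i$. *)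

theory Defs
  imports Complex_Main "HOL-Library.Function_Algebras"
begin

text \<open>Vectors over a finite field 'a are functions nat => 'a; a code of length n
  lives on a finite coordinate set I (e.g. {..<n}) and its vectors vanish outside I.\<close>

definition fscale :: "'a::field \<Rightarrow> (nat \<Rightarrow> 'a) \<Rightarrow> (nat \<Rightarrow> 'a)" where
  "fscale c v = (\<lambda>j. c * v j)"

definition vecs :: "nat set \<Rightarrow> (nat \<Rightarrow> 'a::zero) set" where
  "vecs I = {v. \<forall>j. j \<notin> I \<longrightarrow> v j = 0}"

definition hdist :: "(nat \<Rightarrow> 'a) \<Rightarrow> (nat \<Rightarrow> 'a) \<Rightarrow> nat" where
  "hdist u v = card {j. u j \<noteq> v j}"

definition supp :: "(nat \<Rightarrow> 'a::zero) \<Rightarrow> nat set" where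
  "supp v = {j. v j \<noteq> 0}"

definition wt :: "(nat \<Rightarrow> 'a::zero) \<Rightarrow> nat" where
  "wt v = card (supp v)"

definition linear_code :: "nat set \<Rightarrow> (nat \<Rightarrow> 'a::field) set \<Rightarrow> bool" where
  "linear_code I C \<longleftrightarrow> C \<subseteq> vecs I \<and> module.subspace fscale C"

definition code_dim :: "(nat \<Rightarrow> 'a::field) set \<Rightarrow> nat" where
  "code_dim C = vector_space.dim fscale C"

definition min_dist :: "(nat \<Rightarrow> 'a) set \<Rightarrow> nat" where
  "min_dist C = Min {hdist x y | x y. x \<in> C \<and> y \<in> C \<and> x \<noteq> y}"

definition dist_to :: "(nat \<Rightarrow> 'a) \<Rightarrow> (nat \<Rightarrow> 'a) set \<Rightarrow> nat" where
  "dist_to v C = Min (hdist v ` C)"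

definition cov_radius :: "nat set \<Rightarrow> (nat \<Rightarrow> 'a::zero) set \<Rightarrow> nat" where
  "cov_radius I C = Max ((\<lambda>v. dist_to v C) ` vecs I)"

definition completely_regular :: "nat set \<Rightarrow> (nat \<Rightarrow> 'a::zero) set \<Rightarrow> bool" where
  "completely_regular I C \<longleftrightarrow>
     (\<forall>x\<in>vecs I. \<forall>y\<in>vecs I. dist_to x C = dist_to y C \<longrightarrow>
        (\<forall>i. card {c\<in>C. hdist x c = i} = card {c\<in>C. hdist y c = i}))"

text \<open>Codewords with support inside X, with the coordinates outside X deleted
  (i.e. the code is regarded as a code on the coordinate set X).\<close>
definition shortened :: "(nat \<Rightarrow> 'a::zero) set \<Rightarrow> nat set \<Rightarrow> (nat \<Rightarrow> 'a) set" where
  "shortened C X = (\<lambda>c. \<lambda>j. if j \<in> X then c j else 0) ` {c\<in>C. supp c \<subseteq> X}"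

end

theory Submission
  imports Defs "HOL-Library.FuncSet"
begin

text \<open>For a coordinate j, the codewords at distance one from the unit vector e_j are 0 and, for
  every partner i of j (a coordinate with a weight-2 codeword supported on {i, j}), exactly one
  weight-2 codeword normalised to 1 at j. Hence na = 1 + #partners(j), and as weight-2 supports
  stay inside blocks of size na, every block X is j together with its partners. Fixing l \<in> X and
  the normalised codewords g i supported on {i, l}, the shortened code is spanned by the g i and
  equals the kernel of the single check v l = (\<Sum>i. v i * g i l) on X. Such a hyperplane code has
  covering radius 1 and is completely regular, since the affine maps c \<mapsto> y + a (c - x) preserve
  both Hamming distances and the kernel.\<close>

lemma fscale_apply [simp]: "fscale c v j = c * v j"
  by (simp add: fscale_def)

lemma sum_fun_apply: "(sum F A) (p::nat) = (\<Sum>r\<in>A. F r p :: 'a::comm_monoid_add)"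
  by (induction A rule: infinite_finite_induct) auto

global_interpretation vec: vector_space "fscale :: 'a::field \<Rightarrow> (nat \<Rightarrow> 'a) \<Rightarrow> nat \<Rightarrow> 'a"
  by unfold_locales (auto simp: fscale_def fun_eq_iff algebra_simps)

definition unit_vec :: "nat \<Rightarrow> nat \<Rightarrow> 'a::{zero,one}" where
  "unit_vec j = (\<lambda>i. if i = j then 1 else 0)"

lemma finite_vecs: "finite I \<Longrightarrow> finite (vecs I :: (nat \<Rightarrow> 'a::{zero,finite}) set)"
proof -
  assume "finite I"
  have "vecs I \<subseteq> (\<lambda>f j. if j \<in> I then f j else 0) ` (Pi\<^sub>E I (\<lambda>_. (UNIV::'a set)))"
  proof
    fix v :: "nat \<Rightarrow> 'a" assume "v \<in> vecs I"
    then have "v = (\<lambda>j. if j \<in> I then restrict v I j else 0)"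
      by (auto simp: vecs_def)
    then show "v \<in> (\<lambda>f j. if j \<in> I then f j else 0) ` (Pi\<^sub>E I (\<lambda>_. UNIV))"
      by (rule image_eqI[where x = "restrict v I"]) auto
  qed
  then show ?thesis
    by (rule finite_subset) (use \<open>finite I\<close> in \<open>auto intro!: finite_imageI finite_PiE\<close>)
qed

lemma subspace_vecs: "module.subspace fscale (vecs I :: (nat \<Rightarrow> 'a::field) set)"
  by (auto simp: vec.subspace_def vecs_def)

lemma unit_vec_in_vecs: "j \<in> I \<Longrightarrow> unit_vec j \<in> vecs I"
  by (auto simp: vecs_def unit_vec_def)

lemma supp_unit_vec [simp]: "supp (unit_vec j :: nat \<Rightarrow> 'a::zero_neq_one) = {j}"
  by (auto simp: supp_def unit_vec_def)

lemma supp_subset_if_vecs: "v \<in> vecs I \<Longrightarrow> supp v \<subseteq> I"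
  by (auto simp: vecs_def supp_def)

lemma supp_subset_iff_vecs: "supp v \<subseteq> I \<longleftrightarrow> v \<in> vecs I"
  by (auto simp: vecs_def supp_def)

lemma supp_fscale: "(a::'a::field) \<noteq> 0 \<Longrightarrow> supp (fscale a c) = supp c"
  by (auto simp: supp_def)

lemma hdist_zero_right: "hdist c 0 = wt c"
  by (simp add: hdist_def wt_def supp_def)

lemma hdist_eq_wt_diff: "hdist x y = wt (x - y :: nat \<Rightarrow> 'a::ab_group_add)"
  by (simp add: hdist_def wt_def supp_def)

lemma hdist_subset_coords: "u \<in> vecs I \<Longrightarrow> v \<in> vecs I \<Longrightarrow> {j. u j \<noteq> v j} \<subseteq> I"
  by (auto simp: vecs_def) metis

lemma hdist_eq_0_iff:
  "finite I \<Longrightarrow> u \<in> vecs I \<Longrightarrow> v \<in> vecs I \<Longrightarrow> hdist u v = 0 \<longleftrightarrow> u = v"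
  unfolding hdist_def using hdist_subset_coords[of u I v]
  by (auto simp: fun_eq_iff dest: finite_subset)

lemma hdist_le_1_if_differ_only_at: "{p. u p \<noteq> v p} \<subseteq> {l} \<Longrightarrow> hdist u v \<le> 1"
  unfolding hdist_def using card_mono[of "{l}"] by fastforce

lemma dist_to_le_hdist: "finite C \<Longrightarrow> c \<in> C \<Longrightarrow> dist_to v C \<le> hdist v c"
  by (simp add: dist_to_def)

lemma dist_to_eq_0_iff:
  assumes "finite I" "finite C" "C \<noteq> {}" "C \<subseteq> vecs I" "v \<in> vecs I"
  shows "dist_to v C = 0 \<longleftrightarrow> v \<in> C"
proof
  assume "v \<in> C"
  then show "dist_to v C = 0"
    using dist_to_le_hdist[OF \<open>finite C\<close>, of v v] by (simp add: hdist_def)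
next
  assume "dist_to v C = 0"
  moreover have "dist_to v C \<in> hdist v ` C"
    unfolding dist_to_def using assms(2,3) by (intro Min_in) auto
  ultimately obtain c where "c \<in> C" "hdist v c = 0" by auto
  then show "v \<in> C" using hdist_eq_0_iff assms by (metis subsetD)
qed

lemma finite_hdist_set: "finite C \<Longrightarrow> finite {hdist x y | x y. x \<in> C \<and> y \<in> C \<and> x \<noteq> y}"
  by (rule finite_subset[of _ "(\<lambda>(x, y). hdist x y) ` (C \<times> C)"]) auto

lemma min_dist_le_hdist:
  "finite C \<Longrightarrow> x \<in> C \<Longrightarrow> y \<in> C \<Longrightarrow> x \<noteq> y \<Longrightarrow> min_dist C \<le> hdist x y"
  unfolding min_dist_def by (rule Min_le[OF finite_hdist_set]) auto

lemma min_dist_eqI: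
  assumes "finite C" and "\<And>x y. x \<in> C \<Longrightarrow> y \<in> C \<Longrightarrow> x \<noteq> y \<Longrightarrow> d \<le> hdist x y"
    and "x \<in> C" "y \<in> C" "x \<noteq> y" "hdist x y = d"
  shows "min_dist C = d"
  unfolding min_dist_def
  by (rule Min_eqI[OF finite_hdist_set[OF assms(1)]]) (use assms in auto)

locale linear_form_code =
  fixes X :: "nat set" and f :: "(nat \<Rightarrow> 'a::{field,finite}) \<Rightarrow> 'a" and l :: nat
  assumes finite_coords: "finite X" and l_coord: "l \<in> X"
    and f_add: "\<And>x y. f (x + y) = f x + f y"
    and f_scale: "\<And>a x. f (fscale a x) = a * f x"
    and f_unit_vec: "f (unit_vec l) \<noteq> 0"
begin

definition kernel :: "(nat \<Rightarrow> 'a) set" where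
  "kernel = {v \<in> vecs X. f v = 0}"

lemma f_diff: "f (x - y) = f x - f y"
  using f_add[of "x - y" y] by (simp add: algebra_simps)

lemma finite_kernel: "finite kernel"
  unfolding kernel_def using finite_vecs[OF finite_coords] by (rule finite_subset[rotated]) auto

lemma zero_in_kernel: "0 \<in> kernel"
  using f_diff[of 0 0] by (simp add: kernel_def vecs_def)

lemma kernel_vecs: "kernel \<subseteq> vecs X"
  by (auto simp: kernel_def)

lemma dist_to_kernel_eq_0_iff: "v \<in> vecs X \<Longrightarrow> dist_to v kernel = 0 \<longleftrightarrow> v \<in> kernel"
  using dist_to_eq_0_iff[OF finite_coords finite_kernel _ kernel_vecs] zero_in_kernel by blast

lemma subspace_kernel: "module.subspace fscale kernel"
  unfolding vec.subspace_def kernel_def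
  using zero_in_kernel subspace_vecs[of X]
  by (auto simp: kernel_def f_add f_scale vec.subspace_def)

lemma dist_to_kernel_le_1:
  assumes v: "v \<in> vecs X"
  shows "dist_to v kernel \<le> 1"
proof -
  define c where "c = v - fscale (f v / f (unit_vec l)) (unit_vec l)"
  have "c \<in> vecs X"
    unfolding c_def using v l_coord by (auto simp: vecs_def unit_vec_def)
  moreover have "f c = 0"
    unfolding c_def f_diff f_scale using f_unit_vec by simp
  ultimately have "c \<in> kernel" by (simp add: kernel_def)
  moreover have "{p. v p \<noteq> c p} \<subseteq> {l}" by (auto simp: c_def unit_vec_def)
  ultimately show ?thesis
    using dist_to_le_hdist[OF finite_kernel, of c v] hdist_le_1_if_differ_only_at[of v c l] by simp
qed

lemma cov_radius_kernel: "cov_radius X kernel = 1"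
  unfolding cov_radius_def
proof (rule Max_eqI)
  show "finite ((\<lambda>v. dist_to v kernel) ` vecs X)"
    by (intro finite_imageI finite_vecs finite_coords)
  show "d \<le> 1" if "d \<in> (\<lambda>v. dist_to v kernel) ` vecs X" for d
    using that dist_to_kernel_le_1 by auto
  have "unit_vec l \<notin> kernel" using f_unit_vec by (simp add: kernel_def)
  then have "dist_to (unit_vec l) kernel = 1"
    using dist_to_kernel_le_1 dist_to_kernel_eq_0_iff unit_vec_in_vecs[OF l_coord]
    by (metis le_neq_implies_less less_one)
  then show "1 \<in> (\<lambda>v. dist_to v kernel) ` vecs X"
    using unit_vec_in_vecs[OF l_coord] by force
qed

text \<open>Equal distance to the kernel means f x and f y are both zero or both nonzero, so some
  a \<noteq> 0 has f y = a * f x; then c \<mapsto> y + a (c - x) is a bijection of the kernel with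
  hdist y (y + a (c - x)) = hdist x c.\<close>
lemma completely_regular_kernel: "completely_regular X kernel"
  unfolding completely_regular_def
proof (intro ballI impI allI)
  fix x y i assume x: "x \<in> vecs X" and y: "y \<in> vecs X"
    and eq_dist: "dist_to x kernel = dist_to y kernel"
  have same_zero: "f x = 0 \<longleftrightarrow> f y = 0"
    using dist_to_kernel_eq_0_iff[OF x] dist_to_kernel_eq_0_iff[OF y] eq_dist x y
    by (simp add: kernel_def)
  define a where "a = (if f x = 0 then 1 else f y / f x)"
  have a: "a \<noteq> 0" "f y = a * f x"
    using same_zero by (auto simp: a_def)
  define \<phi> where "\<phi> c = y + fscale a (c - x)" for c
  define \<psi> where "\<psi> c = x + fscale (inverse a) (c - y)" for c
  have \<phi>_kernel: "\<phi> c \<in> kernel" if "c \<in> kernel" for c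
  proof -
    have "f (\<phi> c) = 0" using that a by (simp add: \<phi>_def kernel_def f_add f_scale f_diff)
    then show ?thesis using that x y by (auto simp: \<phi>_def kernel_def vecs_def)
  qed
  have \<psi>_kernel: "\<psi> c \<in> kernel" if "c \<in> kernel" for c
  proof -
    have "f (\<psi> c) = 0" using that a by (simp add: \<psi>_def kernel_def f_add f_scale f_diff)
    then show ?thesis using that x y by (auto simp: \<psi>_def kernel_def vecs_def)
  qed
  have "hdist y (\<phi> c) = hdist x c" "hdist x (\<psi> c) = hdist y c" for c
    using a by (auto simp: \<phi>_def \<psi>_def hdist_def intro!: arg_cong[where f = card])
  moreover have "\<psi> (\<phi> c) = c" "\<phi> (\<psi> c) = c" for c
    using a by (simp_all add: \<phi>_def \<psi>_def fun_eq_iff)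
  ultimately have "bij_betw \<phi> {c\<in>kernel. hdist x c = i} {c\<in>kernel. hdist y c = i}"
    by (intro bij_betw_byWitness[where f' = \<psi>]) (use \<phi>_kernel \<psi>_kernel in auto)
  then show "card {c\<in>kernel. hdist x c = i} = card {c\<in>kernel. hdist y c = i}"
    by (rule bij_betw_same_card)
qed

end

definition partners :: "(nat \<Rightarrow> 'a::zero) set \<Rightarrow> nat \<Rightarrow> nat set" where
  "partners C j = {i. i \<noteq> j \<and> (\<exists>c\<in>C. supp c = {i, j})}"

lemma hdist_unit_vec:
  fixes c :: "nat \<Rightarrow> 'a::zero_neq_one"
  assumes "finite (supp c)"
  shows "hdist (unit_vec j) c = card (supp c - {j}) + (if c j = 1 then 0 else 1)"
proof -
  have diff: "{i. unit_vec j i \<noteq> c i} = (supp c - {j}) \<union> {i. i = j \<and> c j \<noteq> 1}"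
    by (auto simp: unit_vec_def supp_def)
  have "hdist (unit_vec j) c = card (supp c - {j}) + card {i. i = j \<and> c j \<noteq> 1}"
    unfolding hdist_def diff using assms by (intro card_Un_disjoint) auto
  then show ?thesis by simp
qed

locale dist2_code =
  fixes C :: "(nat \<Rightarrow> 'a::{field,finite}) set" and I :: "nat set"
  assumes finite_coords: "finite I"
    and subspace: "module.subspace fscale C"
    and code_vecs: "C \<subseteq> vecs I"
    and hdist_ge_2: "\<And>x y. x \<in> C \<Longrightarrow> y \<in> C \<Longrightarrow> x \<noteq> y \<Longrightarrow> 2 \<le> hdist x y"
begin

lemma zero_in_code: "0 \<in> C"
  using subspace vec.subspace_0 by blast

lemma finite_code: "finite C"
  by (rule finite_subset[OF code_vecs finite_vecs[OF finite_coords]])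

lemma finite_supp: "c \<in> C \<Longrightarrow> finite (supp c)"
  using code_vecs by (intro finite_subset[OF supp_subset_if_vecs finite_coords]) auto

lemma finite_partners: "finite (partners C j)"
proof (rule finite_subset[OF _ finite_coords])
  show "partners C j \<subseteq> I"
    using code_vecs supp_subset_if_vecs by (fastforce simp: partners_def)
qed

lemma codeword_eq_0_if_supp_subset_singleton:
  assumes "c \<in> C" "supp c \<subseteq> {j}"
  shows "c = 0"
proof (rule ccontr)
  assume "c \<noteq> 0"
  then have "2 \<le> wt c"
    using hdist_ge_2[OF assms(1) zero_in_code] by (simp add: hdist_zero_right)
  moreover have "wt c \<le> 1"
    using card_mono[OF _ assms(2)] by (simp add: wt_def)
  ultimately show False by simp
qed

lemma unit_vec_notin_code: "unit_vec j \<notin> C"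
proof
  assume "unit_vec j \<in> C"
  then have "unit_vec j = (0 :: nat \<Rightarrow> 'a)"
    by (rule codeword_eq_0_if_supp_subset_singleton) simp
  then show False by (metis unit_vec_def zero_fun_apply zero_neq_one)
qed

lemma ex_codeword_normalized:
  assumes "c \<in> C" "j \<in> supp c"
  shows "\<exists>c'\<in>C. supp c' = supp c \<and> c' j = 1"
proof -
  have "c j \<noteq> 0" using assms(2) by (simp add: supp_def)
  then show ?thesis
    using vec.subspace_scale[OF subspace assms(1), of "inverse (c j)"] supp_fscale[of "inverse (c j)" c]
    by (intro bexI[where x = "fscale (inverse (c j)) c"]) auto
qed

definition pointed_pairs :: "nat \<Rightarrow> (nat \<Rightarrow> 'a) set" where
  "pointed_pairs j = {c\<in>C. c j = 1 \<and> card (supp c - {j}) = 1}"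

lemma codewords_at_dist_1_from_unit_vec:
  "{c\<in>C. hdist (unit_vec j) c = 1} = insert 0 (pointed_pairs j)"
proof -
  have "hdist (unit_vec j) c = 1 \<longleftrightarrow> c = 0 \<or> c \<in> pointed_pairs j" if c: "c \<in> C" for c
  proof (cases "c j = 1")
    case True
    then have "c \<noteq> 0" by auto
    then show ?thesis
      using True c hdist_unit_vec[OF finite_supp[OF c]] by (simp add: pointed_pairs_def)
  next
    case False
    have "card (supp c - {j}) = 0 \<longleftrightarrow> supp c \<subseteq> {j}"
      using finite_supp[OF c] by auto
    also have "\<dots> \<longleftrightarrow> c = 0"
      using codeword_eq_0_if_supp_subset_singleton[OF c] by (auto simp: supp_def)
    finally show ?thesis
      using False c hdist_unit_vec[OF finite_supp[OF c]] by (simp add: pointed_pairs_def)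
  qed
  then show ?thesis using zero_in_code by (auto simp: pointed_pairs_def)
qed

lemma pointed_pairs_supp:
  assumes "c \<in> pointed_pairs j"
  obtains i where "i \<noteq> j" "supp c = {i, j}" "supp c - {j} = {i}"
proof -
  from assms have "card (supp c - {j}) = 1" "c j = 1" by (simp_all add: pointed_pairs_def)
  then obtain i where i: "supp c - {j} = {i}" by (elim card_1_singletonE)
  have "j \<in> supp c" using \<open>c j = 1\<close> by (simp add: supp_def)
  then have "supp c = {i, j}" using i by blast
  moreover have "i \<noteq> j" using i by blast
  ultimately show ?thesis using i that by blast
qed

lemma bij_betw_pointed_pairs_partners:
  "bij_betw (\<lambda>c. the_elem (supp c - {j})) (pointed_pairs j) (partners C j)"
proof (rule bij_betw_imageI)
  show "inj_on (\<lambda>c. the_elem (supp c - {j})) (pointed_pairs j)"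
  proof (rule inj_onI)
    fix c c' assume c: "c \<in> pointed_pairs j" and c': "c' \<in> pointed_pairs j"
      and eq: "the_elem (supp c - {j}) = the_elem (supp c' - {j})"
    obtain i where i: "i \<noteq> j" "supp c = {i, j}" "supp c - {j} = {i}"
      by (rule pointed_pairs_supp[OF c])
    obtain i' where i': "i' \<noteq> j" "supp c' = {i', j}" "supp c' - {j} = {i'}"
      by (rule pointed_pairs_supp[OF c'])
    have "i' = i" using eq i(3) i'(3) by simp
    have "c p = c' p" if "p \<noteq> i" for p
    proof (cases "p = j")
      case True
      then show ?thesis using c c' by (simp add: pointed_pairs_def)
    next
      case False
      then have "p \<notin> supp c" "p \<notin> supp c'"
        using i(2) i'(2) \<open>i' = i\<close> that by blast+
      then show ?thesis by (simp add: supp_def)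
    qed
    then have "supp (c - c') \<subseteq> {i}" by (auto simp: supp_def)
    moreover have "c - c' \<in> C"
      using c c' vec.subspace_diff[OF subspace] by (simp add: pointed_pairs_def)
    ultimately have "c - c' = 0" by (rule codeword_eq_0_if_supp_subset_singleton[rotated])
    then show "c = c'" by simp
  qed
  show "(\<lambda>c. the_elem (supp c - {j})) ` pointed_pairs j = partners C j"
  proof
    show "(\<lambda>c. the_elem (supp c - {j})) ` pointed_pairs j \<subseteq> partners C j"
    proof
      fix x assume "x \<in> (\<lambda>c. the_elem (supp c - {j})) ` pointed_pairs j"
      then obtain c where c: "c \<in> pointed_pairs j" and x: "x = the_elem (supp c - {j})"
        by blast
      obtain i where "i \<noteq> j" "supp c = {i, j}" "supp c - {j} = {i}"
        by (rule pointed_pairs_supp[OF c])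
      moreover have "c \<in> C" using c by (simp add: pointed_pairs_def)
      ultimately show "x \<in> partners C j" using x by (auto simp: partners_def)
    qed
    show "partners C j \<subseteq> (\<lambda>c. the_elem (supp c - {j})) ` pointed_pairs j"
    proof
      fix i assume "i \<in> partners C j"
      then obtain c where c: "c \<in> C" "supp c = {i, j}" and "i \<noteq> j"
        by (auto simp: partners_def)
      then obtain c' where c': "c' \<in> C" "supp c' = {i, j}" "c' j = 1"
        using ex_codeword_normalized[of c j] by auto
      have "supp c' - {j} = {i}" using c'(2) \<open>i \<noteq> j\<close> by blast
      then have "c' \<in> pointed_pairs j" using c' by (simp add: pointed_pairs_def)
      then show "i \<in> (\<lambda>c. the_elem (supp c - {j})) ` pointed_pairs j"
        using \<open>supp c' - {j} = {i}\<close> by (intro image_eqI[where x = c']) simp_all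
    qed
  qed
qed

lemma card_codewords_at_dist_1_from_unit_vec:
  "card {c\<in>C. hdist (unit_vec j) c = 1} = Suc (card (partners C j))"
proof -
  have "finite (pointed_pairs j)" using finite_code by (simp add: pointed_pairs_def)
  moreover have "0 \<notin> pointed_pairs j" by (simp add: pointed_pairs_def)
  ultimately show ?thesis
    using codewords_at_dist_1_from_unit_vec bij_betw_same_card[OF bij_betw_pointed_pairs_partners]
    by simp
qed

end

lemma shortened_eq: "shortened C X = {c\<in>C. supp c \<subseteq> X}"
proof -
  have "(\<lambda>j. if j \<in> X then c j else 0) = c" if "supp c \<subseteq> X" for c :: "nat \<Rightarrow> 'a"
    using that by (auto simp: supp_def fun_eq_iff)
  then have "shortened C X = (\<lambda>c. c) ` {c\<in>C. supp c \<subseteq> X}"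
    unfolding shortened_def by (intro image_cong) auto
  then show ?thesis by simp
qed

lemma bij_betw_lessThan_Suc_image:
  assumes "bij_betw \<sigma> {..<Suc m} X"
  shows "\<sigma> ` {..<m} = X - {\<sigma> m}"
proof -
  have inj: "inj_on \<sigma> {..<Suc m}" and img: "\<sigma> ` {..<Suc m} = X"
    using assms by (auto simp: bij_betw_def)
  have "\<sigma> m \<notin> \<sigma> ` {..<m}" using inj_on_image_mem_iff[OF inj] by auto
  moreover have "X = insert (\<sigma> m) (\<sigma> ` {..<m})" using img by (simp add: lessThan_Suc)
  ultimately show ?thesis by (metis Diff_insert_absorb)
qed

lemma ex_bij_betw_lessThan_last:
  assumes "finite X" "l \<in> X"
  shows "\<exists>\<sigma>. bij_betw \<sigma> {..<card X} X \<and> \<sigma> (card X - 1) = l"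
proof -
  let ?m = "card X - 1"
  have card: "card (X - {l}) = ?m" using assms by simp
  obtain \<tau> where \<tau>: "bij_betw \<tau> {..<?m} (X - {l})"
    using ex_bij_betw_nat_finite[of "X - {l}"] assms card by (auto simp: atLeast0LessThan)
  define \<sigma> where "\<sigma> r = (if r \<in> {..<?m} then \<tau> r else l)" for r
  have "bij_betw \<sigma> ({..<?m} \<union> {?m}) ((X - {l}) \<union> {l})"
    unfolding \<sigma>_def by (rule bij_betw_disjoint_Un[OF \<tau>]) (auto simp: bij_betw_def)
  moreover have "card X \<noteq> 0" using assms by auto
  then have "{..<?m} \<union> {?m} = {..<card X}" by auto
  moreover have "(X - {l}) \<union> {l} = X" using assms by auto
  ultimately show ?thesis by (auto simp: \<sigma>_def)
qed

text \<open>Row r of the generator matrix [I | h] once the coordinates of a block are listed as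
  \<sigma> 0, ..., \<sigma> m; the last coordinate \<sigma> m carries the column h.\<close>
definition systematic_rows :: "(nat \<Rightarrow> nat) \<Rightarrow> nat \<Rightarrow> (nat \<Rightarrow> 'a::{zero,one}) \<Rightarrow> nat \<Rightarrow> nat \<Rightarrow> 'a"
  where "systematic_rows \<sigma> m h = (\<lambda>r p. if p \<in> \<sigma> ` {..<m} then (if p = \<sigma> r then 1 else 0)
                                      else if p = \<sigma> m then h r else 0)"

locale code_block = dist2_code +
  fixes X :: "nat set" and l :: nat and g :: "nat \<Rightarrow> nat \<Rightarrow> 'a"
  assumes finite_block: "finite X" and l_in_block: "l \<in> X"
    and g_code: "\<And>i. i \<in> X - {l} \<Longrightarrow> g i \<in> C"
    and supp_g: "\<And>i. i \<in> X - {l} \<Longrightarrow> supp (g i) = {i, l}"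
    and g_diag: "\<And>i. i \<in> X - {l} \<Longrightarrow> g i i = 1"
begin

definition parity :: "(nat \<Rightarrow> 'a) \<Rightarrow> 'a" where
  "parity v = v l - (\<Sum>i\<in>X - {l}. v i * g i l)"

sublocale hyperplane: linear_form_code X parity l
proof
  show "parity (x + y) = parity x + parity y" for x y
    by (simp add: parity_def sum.distrib algebra_simps)
  show "parity (fscale a x) = a * parity x" for a x
    by (simp add: parity_def sum_distrib_left algebra_simps)
  show "parity (unit_vec l) \<noteq> 0"
    by (simp add: parity_def unit_vec_def)
qed (use finite_block l_in_block in auto)

lemma g_eq_0: "i \<in> X - {l} \<Longrightarrow> p \<notin> {i, l} \<Longrightarrow> g i p = 0"
  using supp_g by (auto simp: supp_def)

lemma g_vecs: "i \<in> X - {l} \<Longrightarrow> g i \<in> vecs X"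
  using supp_g l_in_block by (auto simp: supp_subset_iff_vecs[symmetric])

lemma combination_apply:
  assumes "p \<in> X - {l}"
  shows "(\<Sum>i\<in>X - {l}. fscale (a i) (g i)) p = a p"
proof -
  have "(\<Sum>i\<in>X - {l}. fscale (a i) (g i)) p = (\<Sum>i\<in>X - {l}. if i = p then a i else 0)"
    unfolding sum_fun_apply fscale_apply
    using assms g_diag g_eq_0 by (intro sum.cong) auto
  also have "\<dots> = a p" using assms finite_block by simp
  finally show ?thesis .
qed

lemma combination_in_code: "(\<Sum>i\<in>X - {l}. fscale (a i) (g i)) \<in> C"
  by (intro vec.subspace_sum[OF subspace] vec.subspace_scale[OF subspace] g_code)

lemma decomposition:
  assumes v: "v \<in> vecs X"
  shows "v = (\<Sum>i\<in>X - {l}. fscale (v i) (g i)) + fscale (parity v) (unit_vec l)"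
proof
  fix p
  show "v p = ((\<Sum>i\<in>X - {l}. fscale (v i) (g i)) + fscale (parity v) (unit_vec l)) p"
  proof (cases "p \<in> X - {l}")
    case True
    then show ?thesis using combination_apply by (simp add: unit_vec_def)
  next
    case False
    consider "p = l" | "p \<notin> X" using False by auto
    then show ?thesis
    proof cases
      case 1
      then show ?thesis by (simp add: sum_fun_apply unit_vec_def parity_def)
    next
      case 2
      have "g i p = 0" if i: "i \<in> X - {l}" for i
      proof -
        have "p \<notin> {i, l}" using 2 i l_in_block by auto
        then show ?thesis using g_eq_0[OF i] by simp
      qed
      moreover have "v p = 0" using 2 v by (simp add: vecs_def)
      moreover have "p \<noteq> l" using 2 l_in_block by auto
      ultimately show ?thesis by (simp add: sum_fun_apply unit_vec_def)
    qed
  qed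
qed

lemma shortened_eq_kernel: "shortened C X = hyperplane.kernel"
proof -
  have "parity c = 0" if c: "c \<in> C" "c \<in> vecs X" for c
  proof -
    let ?r = "fscale (parity c) (unit_vec l)"
    have "?r = c - (\<Sum>i\<in>X - {l}. fscale (c i) (g i))"
      using decomposition[OF c(2)] by (simp add: algebra_simps)
    then have "?r \<in> C"
      using vec.subspace_diff[OF subspace c(1) combination_in_code] by simp
    moreover have "supp ?r \<subseteq> {l}" by (auto simp: supp_def unit_vec_def)
    ultimately have "?r = 0" by (rule codeword_eq_0_if_supp_subset_singleton)
    then have "?r l = 0" by (subst \<open>?r = 0\<close>) simp
    then show ?thesis by (simp add: unit_vec_def)
  qed
  moreover have "v \<in> C" if "v \<in> vecs X" "parity v = 0" for v
  proof -
    have v_eq: "v = (\<Sum>i\<in>X - {l}. fscale (v i) (g i))"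
      using decomposition[OF that(1)] that(2) by simp
    show ?thesis by (subst v_eq) (rule combination_in_code)
  qed
  ultimately show ?thesis
    unfolding shortened_eq hyperplane.kernel_def by (auto simp: supp_subset_iff_vecs)
qed

lemma linear_code_shortened: "linear_code X (shortened C X)"
  unfolding linear_code_def shortened_eq_kernel
  using hyperplane.kernel_vecs hyperplane.subspace_kernel by blast

lemma cov_radius_shortened: "cov_radius X (shortened C X) = 1"
  unfolding shortened_eq_kernel by (rule hyperplane.cov_radius_kernel)

lemma completely_regular_shortened: "completely_regular X (shortened C X)"
  unfolding shortened_eq_kernel by (rule hyperplane.completely_regular_kernel)

lemma span_shortened: "shortened C X = vec.span (g ` (X - {l}))"
proof
  show "shortened C X \<subseteq> vec.span (g ` (X - {l}))"
  proof
    fix v assume "v \<in> shortened C X"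
    then have "v \<in> vecs X" "parity v = 0"
      by (auto simp: shortened_eq_kernel hyperplane.kernel_def)
    then have "v = (\<Sum>i\<in>X - {l}. fscale (v i) (g i))"
      using decomposition[of v] by simp
    also have "\<dots> \<in> vec.span (g ` (X - {l}))"
      by (intro vec.span_sum vec.span_scale vec.span_base) auto
    finally show "v \<in> vec.span (g ` (X - {l}))" .
  qed
  have "g ` (X - {l}) \<subseteq> shortened C X"
    using g_code g_vecs by (auto simp: shortened_eq supp_subset_iff_vecs)
  then show "vec.span (g ` (X - {l})) \<subseteq> shortened C X"
    by (rule vec.span_minimal) (simp add: shortened_eq_kernel hyperplane.subspace_kernel)
qed

lemma inj_on_g: "inj_on g (X - {l})"
proof (rule inj_onI, rule ccontr)
  fix i i' assume i: "i \<in> X - {l}" and i': "i' \<in> X - {l}" and eq: "g i = g i'" and "i \<noteq> i'"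
  then have "g i' i = 0" using g_eq_0[OF i'] by auto
  then show False using eq g_diag[OF i] by simp
qed

lemma independent_g: "vec.independent (g ` (X - {l}))"
proof -
  have "u (g p) = 0" if sum0: "(\<Sum>v\<in>g ` (X - {l}). fscale (u v) v) = 0" and p: "p \<in> X - {l}"
    for u p
  proof -
    have "(\<Sum>i\<in>X - {l}. fscale (u (g i)) (g i)) = (\<Sum>v\<in>g ` (X - {l}). fscale (u v) v)"
      by (simp add: sum.reindex[OF inj_on_g])
    with sum0 have "(\<Sum>i\<in>X - {l}. fscale (u (g i)) (g i)) = 0" by simp
    then show ?thesis using combination_apply[OF p, of "u \<circ> g"] by simp
  qed
  then show ?thesis
    using finite_block by (subst vec.dependent_finite) auto
qed

lemma code_dim_shortened: "code_dim (shortened C X) = card X - 1"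
proof -
  have "code_dim (shortened C X) = card (g ` (X - {l}))"
    unfolding code_dim_def span_shortened using vec.dim_span_eq_card_independent independent_g
    by simp
  also have "\<dots> = card X - 1"
    using card_image[OF inj_on_g] finite_block l_in_block by simp
  finally show ?thesis .
qed

lemma min_dist_shortened:
  assumes "X \<noteq> {l}"
  shows "min_dist (shortened C X) = 2"
proof -
  have "X - {l} \<noteq> {}" using assms l_in_block by auto
  then obtain i where i: "i \<in> X - {l}" by (meson ex_in_conv)
  have "g i \<in> shortened C X"
    using g_code[OF i] g_vecs[OF i] by (simp add: shortened_eq supp_subset_iff_vecs)
  moreover have "0 \<in> shortened C X" using zero_in_code by (simp add: shortened_eq supp_def)
  moreover have "g i \<noteq> 0" using g_diag[OF i] by (metis zero_fun_apply zero_neq_one)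
  moreover have "hdist (g i) 0 = 2" using supp_g[OF i] i by (simp add: hdist_zero_right wt_def)
  moreover have "finite (shortened C X)"
    using hyperplane.finite_kernel by (simp add: shortened_eq_kernel)
  moreover have "2 \<le> hdist x y" if "x \<in> shortened C X" "y \<in> shortened C X" "x \<noteq> y" for x y
    using that hdist_ge_2 by (simp add: shortened_eq)
  ultimately show ?thesis by (intro min_dist_eqI[where x = "g i" and y = 0])
qed

lemma g_last_nonzero: "i \<in> X - {l} \<Longrightarrow> g i l \<noteq> 0"
  using supp_g by (auto simp: supp_def)

lemma shortened_systematic:
  assumes \<sigma>: "bij_betw \<sigma> {..<Suc m} X" and \<sigma>_last: "\<sigma> m = l"
  shows "shortened C X = vec.span (systematic_rows \<sigma> m (\<lambda>r. g (\<sigma> r) l) ` {..<m})"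
proof -
  have \<sigma>_rest: "\<sigma> ` {..<m} = X - {l}"
    using bij_betw_lessThan_Suc_image[OF \<sigma>] \<sigma>_last by simp
  have "systematic_rows \<sigma> m (\<lambda>r. g (\<sigma> r) l) r = g (\<sigma> r)" if r: "r < m" for r
  proof
    fix p
    have i: "\<sigma> r \<in> X - {l}" using \<sigma>_rest r by blast
    show "systematic_rows \<sigma> m (\<lambda>r. g (\<sigma> r) l) r p = g (\<sigma> r) p"
    proof (cases "p \<in> X - {l}")
      case True
      then show ?thesis
        using g_diag[OF i] g_eq_0[OF i] \<sigma>_rest by (auto simp: systematic_rows_def)
    next
      case False
      then show ?thesis
        using g_eq_0[OF i] i \<sigma>_rest \<sigma>_last by (auto simp: systematic_rows_def)
    qed
  qed
  then have "systematic_rows \<sigma> m (\<lambda>r. g (\<sigma> r) l) ` {..<m} = g ` \<sigma> ` {..<m}"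
    unfolding image_image by (intro image_cong) simp_all
  then show ?thesis by (simp only: \<sigma>_rest span_shortened)
qed

end

lemma cov_radius_zero_code:
  assumes "finite I"
  shows "cov_radius I {0 :: nat \<Rightarrow> 'a::{zero_neq_one,finite}} = card I"
  unfolding cov_radius_def
proof (rule Max_eqI)
  show "finite ((\<lambda>v. dist_to v {0 :: nat \<Rightarrow> 'a}) ` vecs I)"
    by (intro finite_imageI finite_vecs assms)
  show "d \<le> card I" if "d \<in> (\<lambda>v. dist_to v {0 :: nat \<Rightarrow> 'a}) ` vecs I" for d
    using that assms card_mono[OF assms supp_subset_if_vecs]
    by (auto simp: dist_to_def hdist_zero_right wt_def)
  define v :: "nat \<Rightarrow> 'a" where "v j = (if j \<in> I then 1 else 0)" for j
  have "v \<in> vecs I" by (simp add: v_def vecs_def)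
  moreover have "supp v = I" by (auto simp: v_def supp_def)
  then have "dist_to v {0} = card I" by (simp add: dist_to_def hdist_zero_right wt_def)
  ultimately show "card I \<in> (\<lambda>v. dist_to v {0 :: nat \<Rightarrow> 'a}) ` vecs I"
    by (metis image_eqI)
qed

lemma ex_codeword_weight_min_dist:
  fixes C :: "(nat \<Rightarrow> 'a::field) set"
  assumes "module.subspace fscale C" "finite C" "C \<noteq> {0}"
  shows "\<exists>c\<in>C. wt c = min_dist C"
proof -
  let ?S = "{hdist x y | x y. x \<in> C \<and> y \<in> C \<and> x \<noteq> y}"
  have "0 \<in> C" using assms(1) vec.subspace_0 by blast
  then obtain x where "x \<in> C" "x \<noteq> 0" using assms(3) by blast
  then have "?S \<noteq> {}" using \<open>0 \<in> C\<close> by blast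
  then have "min_dist C \<in> ?S"
    unfolding min_dist_def by (rule Min_in[OF finite_hdist_set[OF assms(2)]])
  then obtain x y where "x \<in> C" "y \<in> C" "min_dist C = hdist x y" by blast
  then show ?thesis
    using vec.subspace_diff[OF assms(1)] by (metis hdist_eq_wt_diff)
qed

locale partitioned_code = dist2_code +
  fixes na :: nat and P :: "nat set set"
  assumes na_count: "\<And>v. v \<in> vecs I - C \<Longrightarrow> card {c\<in>C. hdist v c = 1} = na"
    and partition_cover: "\<Union>P = I"
    and partition_disjoint: "\<And>X Y. X \<in> P \<Longrightarrow> Y \<in> P \<Longrightarrow> X \<noteq> Y \<Longrightarrow> X \<inter> Y = {}"
    and partition_card: "\<And>X. X \<in> P \<Longrightarrow> card X = na"
    and weight_2_in_block: "\<And>c. c \<in> C \<Longrightarrow> wt c = 2 \<Longrightarrow> \<exists>X\<in>P. supp c \<subseteq> X"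
begin

lemma finite_partition_block: "X \<in> P \<Longrightarrow> finite X"
  using partition_cover finite_coords by (metis Union_upper finite_subset)

lemma na_eq_Suc_card_partners:
  assumes "j \<in> I"
  shows "na = Suc (card (partners C j))"
proof -
  have "unit_vec j \<in> vecs I - C" using unit_vec_in_vecs[OF assms] unit_vec_notin_code by blast
  then show ?thesis using na_count card_codewords_at_dist_1_from_unit_vec[of j] by simp
qed

text \<open>Weight-2 supports never cross blocks, so the partners of j lie in its block; both sets
  have na elements.\<close>
lemma block_eq_insert_partners:
  assumes X: "X \<in> P" and j: "j \<in> X"
  shows "X = insert j (partners C j)"
proof -
  have "partners C j \<subseteq> X"
  proof
    fix i assume "i \<in> partners C j"
    then obtain c where c: "c \<in> C" "supp c = {i, j}" "i \<noteq> j" by (auto simp: partners_def)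
    then obtain Y where "Y \<in> P" "supp c \<subseteq> Y"
      using weight_2_in_block[of c] by (auto simp: wt_def)
    moreover from this have "j \<in> Y" using c by auto
    ultimately have "Y = X" using partition_disjoint[OF _ X] j by blast
    then show "i \<in> X" using \<open>supp c \<subseteq> Y\<close> c by auto
  qed
  moreover have "j \<in> I" using X j partition_cover by blast
  then have "card (insert j (partners C j)) = card X"
    using na_eq_Suc_card_partners partition_card[OF X] finite_partition_block[OF X] \<open>partners C j \<subseteq> X\<close>
    by (simp add: partners_def finite_subset)
  ultimately show ?thesis
    using j finite_partition_block[OF X] by (intro card_subset_eq[symmetric]) auto
qed

lemma two_le_na:
  assumes "c \<in> C" "wt c = 2"
  shows "2 \<le> na"
proof -
  obtain a b where ab: "supp c = {a, b}" "a \<noteq> b"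
    using assms(2) by (auto simp: wt_def card_2_iff)
  then have "a \<in> partners C b" using assms(1) by (auto simp: partners_def)
  moreover have "finite (partners C b)" by (rule finite_partners)
  ultimately have "card (partners C b) \<noteq> 0" by auto
  moreover have "b \<in> I" using assms(1) ab code_vecs supp_subset_if_vecs by blast
  ultimately show ?thesis using na_eq_Suc_card_partners by simp
qed

lemma ex_code_block:
  assumes X: "X \<in> P" and l: "l \<in> X"
  shows "\<exists>g. code_block C I X l g"
proof -
  have "\<exists>c. c \<in> C \<and> supp c = {i, l} \<and> c i = 1" if "i \<in> X - {l}" for i
  proof -
    have "i \<in> partners C l" using block_eq_insert_partners[OF X l] that by blast
    then obtain c where "c \<in> C" "supp c = {i, l}" by (auto simp: partners_def)
    then show ?thesis using ex_codeword_normalized[of c i] by auto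
  qed
  then obtain g where "\<forall>i\<in>X - {l}. g i \<in> C \<and> supp (g i) = {i, l} \<and> g i i = 1"
    by metis
  then have "code_block C I X l g"
    using finite_partition_block[OF X] l
    by (intro code_block.intro dist2_code_axioms code_block_axioms.intro) auto
  then show ?thesis by blast
qed


lemma shortened_block:
  assumes X: "X \<in> P" and na2: "2 \<le> na"
  shows "linear_code X (shortened C X) \<and> completely_regular X (shortened C X)
    \<and> code_dim (shortened C X) = na - 1 \<and> min_dist (shortened C X) = 2
    \<and> cov_radius X (shortened C X) = 1
    \<and> (\<exists>\<sigma> h. bij_betw \<sigma> {..<na} X \<and> (\<forall>r<na - 1. h r \<noteq> 0)
          \<and> shortened C X = vec.span (systematic_rows \<sigma> (na - 1) h ` {..<na - 1}))"
proof -
  have "X \<noteq> {}" using partition_card[OF X] na2 by auto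
  then obtain l where l: "l \<in> X" by blast
  obtain g where "code_block C I X l g" using ex_code_block[OF X l] by blast
  then interpret code_block C I X l g .
  obtain \<sigma> where \<sigma>: "bij_betw \<sigma> {..<na} X" "\<sigma> (na - 1) = l"
    using ex_bij_betw_lessThan_last[OF finite_partition_block[OF X] l] partition_card[OF X] by metis
  have \<sigma>': "bij_betw \<sigma> {..<Suc (na - 1)} X" using \<sigma> na2 by simp
  have "X \<noteq> {l}" using partition_card[OF X] na2 by auto
  have "\<forall>r<na - 1. g (\<sigma> r) l \<noteq> 0"
    using bij_betw_lessThan_Suc_image[OF \<sigma>'] \<sigma>(2) g_last_nonzero by auto
  then have "\<exists>\<sigma> h. bij_betw \<sigma> {..<na} X \<and> (\<forall>r<na - 1. h r \<noteq> 0)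
      \<and> shortened C X = vec.span (systematic_rows \<sigma> (na - 1) h ` {..<na - 1})"
    using \<sigma>(1) shortened_systematic[OF \<sigma>' \<sigma>(2)]
    by (intro exI[of _ \<sigma>] exI[of _ "\<lambda>r. g (\<sigma> r) l"]) simp
  moreover have "code_dim (shortened C X) = na - 1"
    using code_dim_shortened partition_card[OF X] by simp
  moreover have "min_dist (shortened C X) = 2" using min_dist_shortened \<open>X \<noteq> {l}\<close> .
  ultimately show ?thesis
    using linear_code_shortened completely_regular_shortened cov_radius_shortened by blast
qed

end

theorem corollary3p7:
  fixes C :: "(nat \<Rightarrow> 'a::{field,finite}) set" and n k na :: nat and P :: "nat set set"
  assumes lin: "linear_code {..<n} C"
    and dimC: "code_dim C = k"
    and dC: "min_dist C = 2"
    and cr: "completely_regular {..<n} C"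
    and rho: "cov_radius {..<n} C = 1"
    and kn: "k < n - 1"
    and na: "\<forall>v \<in> vecs {..<n} - C. card {c\<in>C. hdist v c = 1} = na"
    and Pcover: "\<Union>P = {..<n}"
    and Pdisj: "\<forall>X\<in>P. \<forall>Y\<in>P. X \<noteq> Y \<longrightarrow> X \<inter> Y = {}"
    and Pcard: "\<forall>X\<in>P. card X = na"
    and Pwt2: "\<forall>c\<in>C. wt c = 2 \<longrightarrow> (\<exists>X\<in>P. supp c \<subseteq> X)"
  shows "\<forall>X\<in>P.
           linear_code X (shortened C X)
         \<and> completely_regular X (shortened C X)
         \<and> card X = na
         \<and> code_dim (shortened C X) = na - 1
         \<and> min_dist (shortened C X) = 2
         \<and> cov_radius X (shortened C X) = 1
         \<and> (\<exists>\<sigma> h. bij_betw \<sigma> {..<na} X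
               \<and> (\<forall>r<na - 1. h r \<noteq> (0::'a))
               \<and> shortened C X = module.span fscale
                   ((\<lambda>r. \<lambda>p. if p \<in> \<sigma> ` {..<na - 1} then (if p = \<sigma> r then 1 else 0)
                             else if p = \<sigma> (na - 1) then h r else 0) ` {..<na - 1}))"
proof -
  have subspace: "module.subspace fscale C" and C_vecs: "C \<subseteq> vecs {..<n}"
    using lin by (auto simp: linear_code_def)
  have finite_C: "finite C" by (rule finite_subset[OF C_vecs finite_vecs]) simp
  interpret dist2_code C "{..<n}"
    using subspace C_vecs min_dist_le_hdist[OF finite_C] dC by unfold_locales auto
  interpret partitioned_code C "{..<n}" na P
    using na Pcover Pdisj Pcard Pwt2 by unfold_locales auto
  have "C \<noteq> {0}"
  proof
    assume "C = {0}"
    then have "cov_radius {..<n} C = n" using cov_radius_zero_code[of "{..<n}"] by simp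
    then show False using rho kn by simp
  qed
  then obtain c where "c \<in> C" "wt c = 2"
    using ex_codeword_weight_min_dist[OF subspace finite_C] dC by metis
  then have "2 \<le> na" by (rule two_le_na)
  then show ?thesis
    using shortened_block Pcard unfolding systematic_rows_def by blast
qed

end
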